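(* Let $R=R_1\times R_2\times R_3$ be a direct product of three finite commutative local rings with identity, and let $I=I_1\times I_2\times I_3$ be an ideal of $R$ with $I_i$ a proper ideal of $R_i$ for $i=1,2,3$. Then $\Gamma''_I(R)$ is planar if and only if $R\cong\mathbb{Z}_2\times\mathbb{Z}_2\times\mathbb{Z}_2$.
   Context: The product has componentwise operations. For a commutative ring $R$ and an ideal $I$ of $R$, $\Gamma''_I(R)$ is the simple undirected graph whose vertex set is $\{x\in R\setminus I : xR+I\neq R\}$, with distinct vertices $x,y$ adjacent if and only if $x\notin yR+I$ and $y\notin xR+I$. A graph is planar if it can be drawn in the plane with edges meeting only at their endpoints. *)

theory Defs
  imports "HOL-Analysis.Analysis" "HOL-Algebra.Algebra"
begin

definition local_ring :: "('a, 'm) ring_scheme \<Rightarrow> bool" where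
  "local_ring R \<longleftrightarrow> cring R \<and> (\<exists>!M. maximalideal M R)"

definition elt_ideal_sum :: "('a, 'm) ring_scheme \<Rightarrow> 'a \<Rightarrow> 'a set \<Rightarrow> 'a set" where
  "elt_ideal_sum R x I = {x \<otimes>\<^bsub>R\<^esub> r \<oplus>\<^bsub>R\<^esub> i | r i. r \<in> carrier R \<and> i \<in> I}"

definition gamma2_verts :: "('a, 'm) ring_scheme \<Rightarrow> 'a set \<Rightarrow> 'a set" where
  "gamma2_verts R I = {x \<in> carrier R - I. elt_ideal_sum R x I \<noteq> carrier R}"

definition gamma2_adj :: "('a, 'm) ring_scheme \<Rightarrow> 'a set \<Rightarrow> 'a \<Rightarrow> 'a \<Rightarrow> bool" where
  "gamma2_adj R I x y \<longleftrightarrow> x \<noteq> y \<and> x \<notin> elt_ideal_sum R y I \<and> y \<notin> elt_ideal_sum R x I"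

text \<open>Planarity of a simple undirected graph with vertex set V and symmetric
  adjacency E: vertices are drawn as distinct points of the plane (complex numbers),
  every edge {u,v} as an arc joining the images of u and v, which meets no other
  vertex point, and two distinct edges only meet in images of common endpoints.\<close>
definition planar_graph :: "'v set \<Rightarrow> ('v \<Rightarrow> 'v \<Rightarrow> bool) \<Rightarrow> bool" where
  "planar_graph V E \<longleftrightarrow>
    (\<exists>(f :: 'v \<Rightarrow> complex) (g :: 'v set \<Rightarrow> real \<Rightarrow> complex).
       inj_on f V \<and>
       (\<forall>u\<in>V. \<forall>v\<in>V. E u v \<longrightarrow>
          arc (g {u, v}) \<and> {pathstart (g {u, v}), pathfinish (g {u, v})} = {f u, f v} \<and>
          path_image (g {u, v}) \<inter> f ` V \<subseteq> {f u, f v}) \<and>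
       (\<forall>u\<in>V. \<forall>v\<in>V. \<forall>u'\<in>V. \<forall>v'\<in>V. E u v \<longrightarrow> E u' v' \<longrightarrow> {u, v} \<noteq> {u', v'} \<longrightarrow>
          path_image (g {u, v}) \<inter> path_image (g {u', v'}) \<subseteq> f ` ({u, v} \<inter> {u', v'})))"

end

theory Submission
  imports Defs
begin

(* If every coordinate of y is either in the ideal or a unit, then x \<in> yR + I holds iff the
   support of x (the set of coordinates outside the ideal) is contained in that of y. In
   Z\<^sub>2 \<times> Z\<^sub>2 \<times> Z\<^sub>2 every element is of this kind, so the graph is the incomparability graph of
   the six proper nonempty subsets of {1, 2, 3}: a triangular prism, which has a straight-line
   drawing. Otherwise some factor has a unit u \<noteq> 1, because a finite local ring whose only unit
   is 1 is {0, 1}; multiplying by u doubles two of the supports, and this yields a K\<^sub>3\<^sub>,\<^sub>3. That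
   K\<^sub>3\<^sub>,\<^sub>3 is not planar follows from the Jordan curve theorem: the edges through b\<^sub>1, b\<^sub>2, b\<^sub>3
   form a theta graph between a\<^sub>1 and a\<^sub>2, and the three edges at a\<^sub>3 would connect its three
   arcs without crossing it. *)

section \<open>Theta graphs and the non-planarity of \<open>K\<^sub>3\<^sub>,\<^sub>3\<close>\<close>

lemma connected_subset_inside:
  assumes "connected Q" "Q \<inter> S = {}" "x \<in> Q" "x \<in> inside S"
  shows "Q \<subseteq> inside S"
proof
  fix y assume "y \<in> Q"
  with assms(1-3) have "connected_component (- S) x y" by (blast intro: connected_componentI)
  then show "y \<in> inside S" using assms(4) by (rule inside_same_component)
qed

lemma connected_component_outside:
  assumes "connected (outside S)" "x \<in> outside S" "y \<in> outside S"
  shows "connected_component (- S) x y"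
  using assms outside_no_overlap[of S] by (intro connected_componentI[of "outside S"]) blast+

definition theta_arcs ::
    "complex \<Rightarrow> complex \<Rightarrow> (real \<Rightarrow> complex) \<Rightarrow> (real \<Rightarrow> complex) \<Rightarrow> (real \<Rightarrow> complex) \<Rightarrow> bool" where
  "theta_arcs a b p q r \<longleftrightarrow> a \<noteq> b \<and>
     (\<forall>\<gamma>\<in>{p, q, r}. arc \<gamma> \<and> pathstart \<gamma> = a \<and> pathfinish \<gamma> = b) \<and>
     path_image p \<inter> path_image q = {a, b} \<and> path_image p \<inter> path_image r = {a, b} \<and>
     path_image q \<inter> path_image r = {a, b}"

lemma theta_arcs_rotate: "theta_arcs a b p q r \<Longrightarrow> theta_arcs a b q r p"
  by (auto simp: theta_arcs_def Int_commute)

lemma theta_arcs_swap: "theta_arcs a b p q r \<Longrightarrow> theta_arcs a b p r q"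
  by (auto simp: theta_arcs_def Int_commute)

lemma theta_arcs_ends_in_images:
  assumes "theta_arcs a b p q r"
  shows "{a, b} \<subseteq> path_image p" "{a, b} \<subseteq> path_image q" "{a, b} \<subseteq> path_image r"
  using assms by (auto simp: theta_arcs_def)

lemma theta_arcs_interior_point:
  assumes "theta_arcs a b p q r"
  obtains z where "z \<in> path_image r" "z \<notin> {a, b}"
proof -
  have "arc r" "pathstart r = a" "pathfinish r = b" using assms by (auto simp: theta_arcs_def)
  then have "r (1/2) \<noteq> a" "r (1/2) \<noteq> b"
    unfolding arc_def pathstart_def pathfinish_def by (fastforce dest: inj_onD)+
  then show thesis by (intro that[of "r (1/2)"]) (auto simp: path_image_def)
qed

lemma theta_arcs_Jordan:
  assumes "theta_arcs a b p q r"
  shows "inside (path_image p \<union> path_image q) \<noteq> {}"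
    and "connected (inside (path_image p \<union> path_image q))"
    and "connected (outside (path_image p \<union> path_image q))"
    and "frontier (inside (path_image p \<union> path_image q)) = path_image p \<union> path_image q"
proof -
  have "arc p" "arc q" "pathstart p = a" "pathfinish p = b" "pathstart q = a" "pathfinish q = b"
    and "path_image p \<inter> path_image q = {a, b}"
    using assms by (auto simp: theta_arcs_def)
  then have "simple_path (p +++ reversepath q)"
    and "path_image (p +++ reversepath q) = path_image p \<union> path_image q"
    and "pathfinish (p +++ reversepath q) = pathstart (p +++ reversepath q)"
    by (auto simp: simple_path_join_loop_eq arc_simple_path simple_path_reversepath path_image_join)
  then show "inside (path_image p \<union> path_image q) \<noteq> {}"
    and "connected (inside (path_image p \<union> path_image q))"
    and "connected (outside (path_image p \<union> path_image q))"
    and "frontier (inside (path_image p \<union> path_image q)) = path_image p \<union> path_image q"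
    using Jordan_inside_outside by metis+
qed

lemma theta_arcs_inside_outside:
  assumes theta: "theta_arcs a b p1 p2 p3"
    and avoid1: "path_image p1 \<inter> inside (path_image p2 \<union> path_image p3) = {}"
    and avoid3: "path_image p3 \<inter> inside (path_image p1 \<union> path_image p2) = {}"
    and w: "w \<in> inside (path_image p2 \<union> path_image p3)"
  shows "w \<in> outside (path_image p1 \<union> path_image p2)"
proof (rule ccontr)
  let ?P1 = "path_image p1" let ?P2 = "path_image p2" let ?P3 = "path_image p3"
  note J12 = theta_arcs_Jordan[OF theta] and J23 = theta_arcs_Jordan[OF theta_arcs_rotate[OF theta]]
  obtain B where B: "B \<in> ?P3" "B \<notin> {a, b}" using theta_arcs_interior_point[OF theta] .
  have disj: "inside (?P2 \<union> ?P3) \<inter> (?P1 \<union> ?P2) = {}" using avoid1 inside_no_overlap by blast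
  assume "w \<notin> outside (?P1 \<union> ?P2)"
  with w disj have "w \<in> inside (?P1 \<union> ?P2)" using inside_Un_outside by blast
  then have "inside (?P2 \<union> ?P3) \<subseteq> inside (?P1 \<union> ?P2)"
    using connected_subset_inside[OF J23(2) disj] w by blast
  then have "closure (inside (?P2 \<union> ?P3)) \<subseteq> inside (?P1 \<union> ?P2) \<union> (?P1 \<union> ?P2)"
    using closure_mono closure_Un_frontier J12(4) by metis
  moreover have "B \<in> closure (inside (?P2 \<union> ?P3))"
    using J23(4) B(1) closure_Un_frontier by blast
  moreover have "B \<notin> ?P1 \<union> ?P2" using theta B by (auto simp: theta_arcs_def)
  ultimately show False using avoid3 B(1) by blast
qed

text \<open>If no arc entered the inside of the cycle formed by the other two, a point inside the cycle
  of the second and third arcs would lie outside the other two cycles, hence, by Janiszewski's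
  theorem, outside the whole theta graph.\<close>
lemma theta_arcs_nested:
  assumes theta: "theta_arcs a b p1 p2 p3"
  shows "path_image p1 \<inter> inside (path_image p2 \<union> path_image p3) \<noteq> {} \<or>
         path_image p2 \<inter> inside (path_image p1 \<union> path_image p3) \<noteq> {} \<or>
         path_image p3 \<inter> inside (path_image p1 \<union> path_image p2) \<noteq> {}"
proof (rule ccontr)
  let ?P1 = "path_image p1" let ?P2 = "path_image p2" let ?P3 = "path_image p3"
  assume "\<not> ?thesis"
  then have avoid: "?P1 \<inter> inside (?P2 \<union> ?P3) = {}" "?P2 \<inter> inside (?P1 \<union> ?P3) = {}"
    "?P3 \<inter> inside (?P1 \<union> ?P2) = {}" by blast+
  obtain w where w: "w \<in> inside (?P2 \<union> ?P3)"
    using theta_arcs_Jordan(1)[OF theta_arcs_rotate[OF theta]] by blast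
  have w12: "w \<in> outside (?P1 \<union> ?P2)" by (rule theta_arcs_inside_outside[OF theta avoid(1,3) w])
  have w13: "w \<in> outside (?P1 \<union> ?P3)"
    using theta_arcs_inside_outside[OF theta_arcs_swap[OF theta]] avoid w by (simp add: sup_commute)
  have arcs: "arc p1" "arc p2" "arc p3" using theta by (auto simp: theta_arcs_def)
  then obtain v where v: "v \<in> outside (?P1 \<union> ?P2 \<union> ?P3)"
    using outside_bounded_nonempty[of "?P1 \<union> ?P2 \<union> ?P3"] by (auto simp: bounded_arc_image)
  have cc12: "connected_component (- (?P1 \<union> ?P2)) w v"
    using v outside_mono[of "?P1 \<union> ?P2" "?P1 \<union> ?P2 \<union> ?P3"]
    by (intro connected_component_outside[OF theta_arcs_Jordan(3)[OF theta] w12]) blast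
  have cc13: "connected_component (- (?P1 \<union> ?P3)) w v"
    using v outside_mono[of "?P1 \<union> ?P3" "?P1 \<union> ?P2 \<union> ?P3"]
    by (intro connected_component_outside[OF theta_arcs_Jordan(3)[OF theta_arcs_swap[OF theta]] w13]) blast
  have "(?P1 \<union> ?P2) \<inter> (?P1 \<union> ?P3) = ?P1"
    using theta theta_arcs_ends_in_images(1)[OF theta] by (auto simp: theta_arcs_def)
  then have "connected ((?P1 \<union> ?P2) \<inter> (?P1 \<union> ?P3))" using arcs(1) by (simp add: connected_arc_image)
  moreover have "compact (?P1 \<union> ?P2)" "closed (?P1 \<union> ?P3)"
    using arcs by (auto simp: compact_arc_image closed_arc_image)
  ultimately have "connected_component (- ((?P1 \<union> ?P2) \<union> (?P1 \<union> ?P3))) w v"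
    using Janiszewski cc12 cc13 by blast
  then have "connected_component (- (?P2 \<union> ?P3)) w v"
    by (rule connected_component_of_subset) blast
  then have "v \<in> inside (?P2 \<union> ?P3)" using w by (rule inside_same_component)
  moreover have "v \<in> outside (?P2 \<union> ?P3)" using v outside_mono[of "?P2 \<union> ?P3" "?P1 \<union> ?P2 \<union> ?P3"] by blast
  ultimately show False using inside_Int_outside by blast
qed

definition tripod ::
    "complex set \<Rightarrow> complex set \<Rightarrow> complex set \<Rightarrow> complex set \<Rightarrow> complex set \<Rightarrow> complex set \<Rightarrow> bool" where
  "tripod Q1 Q2 Q3 S1 S2 S3 \<longleftrightarrow> connected Q1 \<and> connected Q2 \<and> connected Q3 \<and> Q1 \<inter> Q2 \<inter> Q3 \<noteq> {} \<and>
     Q1 \<inter> S1 \<noteq> {} \<and> Q2 \<inter> S2 \<noteq> {} \<and> Q3 \<inter> S3 \<noteq> {} \<and>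
     Q1 \<inter> (S2 \<union> S3) = {} \<and> Q2 \<inter> (S1 \<union> S3) = {} \<and> Q3 \<inter> (S1 \<union> S2) = {}"

lemma tripod_rotate: "tripod Q1 Q2 Q3 S1 S2 S3 \<Longrightarrow> tripod Q2 Q3 Q1 S2 S3 S1"
  by (auto simp: tripod_def)

lemma tripod_swap: "tripod Q1 Q2 Q3 S1 S2 S3 \<Longrightarrow> tripod Q1 Q3 Q2 S1 S3 S2"
  by (auto simp: tripod_def)

text \<open>The third arc splits the inside of the cycle formed by the other two into two regions. The
  centre of the tripod lies in one of them, which separates it from the arc bounding the other.\<close>
lemma theta_arcs_no_tripod_nested:
  assumes theta: "theta_arcs a b p1 p2 p3"
    and nested: "path_image p3 \<inter> inside (path_image p1 \<union> path_image p2) \<noteq> {}"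
    and tri: "tripod Q1 Q2 Q3 (path_image p1) (path_image p2) (path_image p3)"
  shows False
proof -
  let ?P1 = "path_image p1" let ?P2 = "path_image p2" let ?P3 = "path_image p3"
  have Q: "connected Q1" "connected Q2" "connected Q3"
    and avoid: "Q1 \<inter> (?P2 \<union> ?P3) = {}" "Q2 \<inter> (?P1 \<union> ?P3) = {}" "Q3 \<inter> (?P1 \<union> ?P2) = {}"
    using tri by (simp_all add: tripod_def)
  obtain z where z: "z \<in> Q1" "z \<in> Q2" "z \<in> Q3" using tri by (auto simp: tripod_def)
  obtain B1 B2 B3 where B: "B1 \<in> Q1 \<inter> ?P1" "B2 \<in> Q2 \<inter> ?P2" "B3 \<in> Q3 \<inter> ?P3"
    using tri by (auto simp: tripod_def)
  have "B3 \<notin> {a, b}" using B(3) avoid(3) theta_arcs_ends_in_images(1)[OF theta] by blast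
  obtain split: "inside (?P1 \<union> ?P3) \<union> inside (?P2 \<union> ?P3) \<union> (?P3 - {a, b}) = inside (?P1 \<union> ?P2)"
    using split_inside_simple_closed_curve[of p1 a b p2 p3] theta nested
    by (auto simp: theta_arcs_def arc_imp_simple_path)
  have "B3 \<in> inside (?P1 \<union> ?P2)" using split B(3) \<open>B3 \<notin> {a, b}\<close> by blast
  then have "Q3 \<subseteq> inside (?P1 \<union> ?P2)"
    using connected_subset_inside[OF Q(3)] avoid(3) B(3) by blast
  moreover have "z \<notin> ?P3" using z(1) avoid(1) by blast
  ultimately consider "z \<in> inside (?P1 \<union> ?P3)" | "z \<in> inside (?P2 \<union> ?P3)" using split z(3) by blast
  then show False
  proof cases
    case 1
    then have "Q2 \<subseteq> inside (?P1 \<union> ?P3)"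
      using connected_subset_inside[OF Q(2)] avoid(2) z(2) by blast
    moreover have "B2 \<notin> inside (?P1 \<union> ?P2)" using B(2) inside_no_overlap by blast
    ultimately show False using split B(2) by blast
  next
    case 2
    then have "Q1 \<subseteq> inside (?P2 \<union> ?P3)"
      using connected_subset_inside[OF Q(1)] avoid(1) z(1) by blast
    moreover have "B1 \<notin> inside (?P1 \<union> ?P2)" using B(1) inside_no_overlap by blast
    ultimately show False using split B(1) by blast
  qed
qed

theorem theta_arcs_no_tripod:
  assumes theta: "theta_arcs a b p1 p2 p3"
    and tri: "tripod Q1 Q2 Q3 (path_image p1) (path_image p2) (path_image p3)"
  shows False
  using theta_arcs_nested[OF theta]
proof (elim disjE)
  assume "path_image p1 \<inter> inside (path_image p2 \<union> path_image p3) \<noteq> {}"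
  then show False
    by (rule theta_arcs_no_tripod_nested[OF theta_arcs_rotate[OF theta] _ tripod_rotate[OF tri]])
next
  assume "path_image p2 \<inter> inside (path_image p1 \<union> path_image p3) \<noteq> {}"
  then show False
    by (rule theta_arcs_no_tripod_nested[OF theta_arcs_swap[OF theta] _ tripod_swap[OF tri]])
next
  assume "path_image p3 \<inter> inside (path_image p1 \<union> path_image p2) \<noteq> {}"
  then show False by (rule theta_arcs_no_tripod_nested[OF theta _ tri])
qed

definition arc_drawing ::
    "'v set \<Rightarrow> ('v \<Rightarrow> 'v \<Rightarrow> bool) \<Rightarrow> ('v \<Rightarrow> complex) \<Rightarrow> ('v \<Rightarrow> 'v \<Rightarrow> real \<Rightarrow> complex) \<Rightarrow> bool" where
  "arc_drawing V E f \<gamma> \<longleftrightarrow> inj_on f V \<and>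
     (\<forall>u\<in>V. \<forall>v\<in>V. E u v \<longrightarrow> arc (\<gamma> u v) \<and> pathstart (\<gamma> u v) = f u \<and> pathfinish (\<gamma> u v) = f v) \<and>
     (\<forall>u\<in>V. \<forall>v\<in>V. \<forall>u'\<in>V. \<forall>v'\<in>V. E u v \<longrightarrow> E u' v' \<longrightarrow> {u, v} \<noteq> {u', v'} \<longrightarrow>
        path_image (\<gamma> u v) \<inter> path_image (\<gamma> u' v') \<subseteq> f ` ({u, v} \<inter> {u', v'}))"

text \<open>Unlike \<^const>\<open>planar_graph\<close>, an arc drawing orients every edge from its first to its second
  vertex.\<close>
lemma planar_graph_imp_arc_drawing:
  assumes "planar_graph V E"
  shows "\<exists>f \<gamma>. arc_drawing V E f \<gamma>"
proof -
  obtain f :: "_ \<Rightarrow> complex" and g where inj: "inj_on f V"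
    and arcs: "\<forall>u\<in>V. \<forall>v\<in>V. E u v \<longrightarrow>
          arc (g {u, v}) \<and> {pathstart (g {u, v}), pathfinish (g {u, v})} = {f u, f v} \<and>
          path_image (g {u, v}) \<inter> f ` V \<subseteq> {f u, f v}"
    and cross: "\<forall>u\<in>V. \<forall>v\<in>V. \<forall>u'\<in>V. \<forall>v'\<in>V. E u v \<longrightarrow> E u' v' \<longrightarrow> {u, v} \<noteq> {u', v'} \<longrightarrow>
          path_image (g {u, v}) \<inter> path_image (g {u', v'}) \<subseteq> f ` ({u, v} \<inter> {u', v'})"
    using assms unfolding planar_graph_def by (elim exE conjE) (rule that)
  define \<gamma> where "\<gamma> u v = (if pathstart (g {u, v}) = f u then g {u, v} else reversepath (g {u, v}))" for u v
  have "path_image (\<gamma> u v) = path_image (g {u, v})" for u v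
    by (simp add: \<gamma>_def)
  moreover have "arc (\<gamma> u v) \<and> pathstart (\<gamma> u v) = f u \<and> pathfinish (\<gamma> u v) = f v"
    if "u \<in> V" "v \<in> V" "E u v" for u v
  proof -
    have "arc (g {u, v}) \<and> {pathstart (g {u, v}), pathfinish (g {u, v})} = {f u, f v}"
      using arcs that by blast
    then show ?thesis by (auto simp: \<gamma>_def doubleton_eq_iff arc_reversepath)
  qed
  ultimately have "arc_drawing V E f \<gamma>" using inj cross by (simp add: arc_drawing_def)
  then show ?thesis by blast
qed

locale K33_drawing =
  fixes V :: "'v set" and E :: "'v \<Rightarrow> 'v \<Rightarrow> bool" and f :: "'v \<Rightarrow> complex"
    and \<gamma> :: "'v \<Rightarrow> 'v \<Rightarrow> real \<Rightarrow> complex" and a1 a2 a3 b1 b2 b3 :: 'v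
  assumes drawing: "arc_drawing V E f \<gamma>"
    and V: "{a1, a2, a3, b1, b2, b3} \<subseteq> V" and distinct: "distinct [a1, a2, a3, b1, b2, b3]"
    and E: "\<And>a b. a \<in> {a1, a2, a3} \<Longrightarrow> b \<in> {b1, b2, b3} \<Longrightarrow> E a b"
begin

lemma edge:
  assumes "a \<in> {a1, a2, a3}" "b \<in> {b1, b2, b3}"
  shows "arc (\<gamma> a b)" "pathstart (\<gamma> a b) = f a" "pathfinish (\<gamma> a b) = f b"
  using drawing E[OF assms] V assms by (auto simp: arc_drawing_def)

lemma edge_ends:
  assumes "a \<in> {a1, a2, a3}" "b \<in> {b1, b2, b3}"
  shows "f a \<in> path_image (\<gamma> a b)" "f b \<in> path_image (\<gamma> a b)"
  using edge(2,3)[OF assms] pathstart_in_path_image[of "\<gamma> a b"] pathfinish_in_path_image[of "\<gamma> a b"]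
  by simp_all

lemma edges_meet:
  assumes "a \<in> {a1, a2, a3}" "b \<in> {b1, b2, b3}" "a' \<in> {a1, a2, a3}" "b' \<in> {b1, b2, b3}"
    and "(a, b) \<noteq> (a', b')"
  shows "path_image (\<gamma> a b) \<inter> path_image (\<gamma> a' b') \<subseteq> f ` ({a, b} \<inter> {a', b'})"
proof -
  have "{a, b} \<noteq> {a', b'}" using assms distinct by (auto simp: doubleton_eq_iff)
  moreover have "a \<in> V" "b \<in> V" "a' \<in> V" "b' \<in> V" "E a b" "E a' b'" using assms V E by auto
  ultimately show ?thesis using drawing unfolding arc_drawing_def by blast
qed

lemma edges_disjoint:
  assumes "a \<in> {a1, a2, a3}" "b \<in> {b1, b2, b3}" "a' \<in> {a1, a2, a3}" "b' \<in> {b1, b2, b3}"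
    and "a \<noteq> a'" "b \<noteq> b'"
  shows "path_image (\<gamma> a b) \<inter> path_image (\<gamma> a' b') = {}"
  using edges_meet[OF assms(1-4)] assms distinct by auto

definition via :: "'v \<Rightarrow> real \<Rightarrow> complex" where
  "via b = \<gamma> a1 b +++ reversepath (\<gamma> a2 b)"

lemma via:
  assumes "b \<in> {b1, b2, b3}"
  shows "arc (via b)" "pathstart (via b) = f a1" "pathfinish (via b) = f a2"
    and "path_image (via b) = path_image (\<gamma> a1 b) \<union> path_image (\<gamma> a2 b)"
proof -
  have "path_image (\<gamma> a1 b) \<inter> path_image (\<gamma> a2 b) \<subseteq> {f b}"
    using edges_meet[of a1 b a2 b] assms distinct by auto
  then show "arc (via b)" unfolding via_def
    using edge[of a1 b] edge[of a2 b] assms by (intro arc_join) (auto simp: arc_reversepath)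
  show "pathstart (via b) = f a1" "pathfinish (via b) = f a2"
    "path_image (via b) = path_image (\<gamma> a1 b) \<union> path_image (\<gamma> a2 b)"
    unfolding via_def using edge[of a1 b] edge[of a2 b] assms by (auto simp: path_image_join)
qed

lemma via_meet:
  assumes "b \<in> {b1, b2, b3}" "b' \<in> {b1, b2, b3}" "b \<noteq> b'"
  shows "path_image (via b) \<inter> path_image (via b') = {f a1, f a2}"
proof
  have "f a1 \<in> path_image (via c)" "f a2 \<in> path_image (via c)" if "c \<in> {b1, b2, b3}" for c
    using via(2,3)[OF that] pathstart_in_path_image[of "via c"] pathfinish_in_path_image[of "via c"]
    by simp_all
  then show "{f a1, f a2} \<subseteq> path_image (via b) \<inter> path_image (via b')" using assms by blast
  show "path_image (via b) \<inter> path_image (via b') \<subseteq> {f a1, f a2}"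
    using edges_meet[of a1 b a1 b'] edges_meet[of a2 b a2 b'] edges_disjoint[of a1 b a2 b']
      edges_disjoint[of a2 b a1 b'] via(4)[OF assms(1)] via(4)[OF assms(2)] assms distinct by auto
qed

lemma theta_arcs_via: "theta_arcs (f a1) (f a2) (via b1) (via b2) (via b3)"
proof -
  have "f a1 \<noteq> f a2" using drawing V distinct by (auto simp: arc_drawing_def dest: inj_onD)
  then show ?thesis
    using via[of b1] via[of b2] via[of b3] via_meet[of b1 b2] via_meet[of b1 b3] via_meet[of b2 b3] distinct
    by (simp add: theta_arcs_def)
qed

lemma tripod_via:
  "tripod (path_image (\<gamma> a3 b1)) (path_image (\<gamma> a3 b2)) (path_image (\<gamma> a3 b3))
     (path_image (via b1)) (path_image (via b2)) (path_image (via b3))"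
proof -
  have legs: "connected (path_image (\<gamma> a3 b))" "f a3 \<in> path_image (\<gamma> a3 b)"
    "f b \<in> path_image (\<gamma> a3 b) \<inter> path_image (via b)" if "b \<in> {b1, b2, b3}" for b
  proof -
    show "connected (path_image (\<gamma> a3 b))" using edge(1)[of a3 b] that by (simp add: connected_arc_image)
    show "f a3 \<in> path_image (\<gamma> a3 b)" using edge_ends(1)[of a3 b] that by simp
    show "f b \<in> path_image (\<gamma> a3 b) \<inter> path_image (via b)"
      using edge_ends(2)[of a3 b] edge_ends(2)[of a1 b] via(4)[OF that] that by simp
  qed
  have legs_avoid: "path_image (\<gamma> a3 b) \<inter> path_image (via b') = {}"
    if "b \<in> {b1, b2, b3}" "b' \<in> {b1, b2, b3}" "b \<noteq> b'" for b b'
    using edges_disjoint[of a3 b a1 b'] edges_disjoint[of a3 b a2 b'] via(4)[OF that(2)] that distinct by auto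
  show ?thesis
    unfolding tripod_def
    using legs[of b1] legs[of b2] legs[of b3] distinct
      legs_avoid[of b1 b2] legs_avoid[of b1 b3] legs_avoid[of b2 b1] legs_avoid[of b2 b3]
      legs_avoid[of b3 b1] legs_avoid[of b3 b2]
    by (auto simp: Int_Un_distrib)
qed

end

theorem not_planar_graph_K33:
  assumes "{a1, a2, a3, b1, b2, b3} \<subseteq> V" "distinct [a1, a2, a3, b1, b2, b3]"
    and "\<And>a b. a \<in> {a1, a2, a3} \<Longrightarrow> b \<in> {b1, b2, b3} \<Longrightarrow> E a b"
  shows "\<not> planar_graph V E"
proof
  assume "planar_graph V E"
  then obtain f \<gamma> where "arc_drawing V E f \<gamma>" using planar_graph_imp_arc_drawing by blast
  then interpret K33_drawing V E f \<gamma> a1 a2 a3 b1 b2 b3 using assms by unfold_locales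
  show False by (rule theta_arcs_no_tripod[OF theta_arcs_via tripod_via])
qed

section \<open>A straight-line drawing of the triangular prism\<close>

definition incomparable :: "'a::ord \<Rightarrow> 'a \<Rightarrow> bool" where
  "incomparable x y \<longleftrightarrow> \<not> x \<le> y \<and> \<not> y \<le> x"

text \<open>Subsets of a three-element set are encoded as boolean triples. The singletons form the outer
  triangle, their complements the inner one.\<close>
fun prism_vertex :: "bool \<times> bool \<times> bool \<Rightarrow> complex" where
  "prism_vertex (True, False, False) = Complex 0 0"
| "prism_vertex (False, True, False) = Complex 6 0"
| "prism_vertex (False, False, True) = Complex 0 6"
| "prism_vertex (False, True, True) = Complex 1 1"
| "prism_vertex (True, False, True) = Complex 3 1"
| "prism_vertex (True, True, False) = Complex 1 3"
| "prism_vertex _ = 0"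

definition prism_edges :: "((bool \<times> bool \<times> bool) \<times> (bool \<times> bool \<times> bool)) list" where
  "prism_edges =
     [((True, False, False), (False, True, False)), ((True, False, False), (False, False, True)),
      ((False, True, False), (False, False, True)), ((False, True, True), (True, False, True)),
      ((False, True, True), (True, True, False)), ((True, False, True), (True, True, False)),
      ((True, False, False), (False, True, True)), ((False, True, False), (True, False, True)),
      ((False, False, True), (True, True, False))]"

definition prism_vertices :: "(bool \<times> bool \<times> bool) list" where
  "prism_vertices = [(True, False, False), (False, True, False), (False, False, True),
                     (False, True, True), (True, False, True), (True, True, False)]"

lemma mem_prism_vertices_iff:
  "s \<in> set prism_vertices \<longleftrightarrow> s \<notin> {(False, False, False), (True, True, True)}"
proof -
  obtain x y z where "s = (x, y, z)" by (cases s rule: prod_cases3)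
  then show ?thesis by (cases x; cases y; cases z) (simp_all add: prism_vertices_def)
qed

lemma incomparable_in_prism_edges:
  assumes "s \<in> set prism_vertices" "t \<in> set prism_vertices" "incomparable s t"
  shows "(s, t) \<in> set prism_edges \<or> (t, s) \<in> set prism_edges"
  using assms unfolding prism_vertices_def prism_edges_def incomparable_def
  by (simp only: list.set insert_iff empty_iff) (elim disjE; simp)

lemma prism_edges_cross_table:
  "list_all (\<lambda>(a, b). list_all (\<lambda>(c, d). (a, b) = (c, d) \<or>
      closed_segment (prism_vertex a) (prism_vertex b) \<inter> closed_segment (prism_vertex c) (prism_vertex d)
        \<subseteq> prism_vertex ` ({a, b} \<inter> {c, d})) prism_edges) prism_edges"
  unfolding prism_edges_def
  apply (simp only: list_all_iff list.set ball_simps prod.case)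
  apply (intro conjI)
  apply (simp_all)
  apply (auto simp: closed_segment_def complex_eq_iff scaleR_conv_of_real algebra_simps)
  done

lemma prism_edges_cross:
  assumes "(a, b) \<in> set prism_edges" "(c, d) \<in> set prism_edges" "(a, b) \<noteq> (c, d)"
  shows "closed_segment (prism_vertex a) (prism_vertex b) \<inter> closed_segment (prism_vertex c) (prism_vertex d)
           \<subseteq> prism_vertex ` ({a, b} \<inter> {c, d})"
proof -
  note row = bspec[OF prism_edges_cross_table[unfolded list_all_iff] assms(1), unfolded prod.case]
  show ?thesis using bspec[OF row assms(2)] assms(3) by (simp only: prod.case simp_thms)
qed

lemma prism_edges_avoid_vertices_table:
  "list_all (\<lambda>(a, b). list_all (\<lambda>w. w = a \<or> w = b \<or>
      prism_vertex w \<notin> closed_segment (prism_vertex a) (prism_vertex b)) prism_vertices) prism_edges"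
  unfolding prism_edges_def prism_vertices_def
  apply (simp only: list_all_iff list.set ball_simps prod.case)
  apply (intro conjI)
  apply (simp_all)
  apply (auto simp: closed_segment_def complex_eq_iff scaleR_conv_of_real algebra_simps)
  done

lemma prism_edges_avoid_vertices:
  assumes "(a, b) \<in> set prism_edges" "w \<in> set prism_vertices"
    and "prism_vertex w \<in> closed_segment (prism_vertex a) (prism_vertex b)"
  shows "w \<in> {a, b}"
proof -
  note row = bspec[OF prism_edges_avoid_vertices_table[unfolded list_all_iff] assms(1), unfolded prod.case]
  show ?thesis using bspec[OF row assms(2)] assms(3) by blast
qed

lemma inj_on_prism_vertex: "inj_on prism_vertex (set prism_vertices)"
  unfolding inj_on_def prism_vertices_def by (auto simp: complex_eq_iff)

lemma incomparable_prism_edgeE: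
  assumes "s \<in> set prism_vertices" "t \<in> set prism_vertices" "incomparable s t"
  obtains a b where "(a, b) \<in> set prism_edges" "{a, b} = {s, t}"
    "closed_segment (prism_vertex a) (prism_vertex b) = closed_segment (prism_vertex s) (prism_vertex t)"
proof -
  from incomparable_in_prism_edges[OF assms] show thesis
  proof
    assume "(s, t) \<in> set prism_edges"
    then show thesis by (rule that) simp_all
  next
    assume "(t, s) \<in> set prism_edges"
    then show thesis by (rule that) (simp_all add: insert_commute closed_segment_commute)
  qed
qed

lemma prism_segments_cross:
  assumes "s \<in> set prism_vertices" "t \<in> set prism_vertices" "incomparable s t"
    and "s' \<in> set prism_vertices" "t' \<in> set prism_vertices" "incomparable s' t'"
    and "{s, t} \<noteq> {s', t'}"
  shows "closed_segment (prism_vertex s) (prism_vertex t) \<inter> closed_segment (prism_vertex s') (prism_vertex t')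
           \<subseteq> prism_vertex ` ({s, t} \<inter> {s', t'})"
proof -
  obtain a b where ab: "(a, b) \<in> set prism_edges" "{a, b} = {s, t}"
    "closed_segment (prism_vertex a) (prism_vertex b) = closed_segment (prism_vertex s) (prism_vertex t)"
    using incomparable_prism_edgeE[OF assms(1-3)] .
  obtain c d where cd: "(c, d) \<in> set prism_edges" "{c, d} = {s', t'}"
    "closed_segment (prism_vertex c) (prism_vertex d) = closed_segment (prism_vertex s') (prism_vertex t')"
    using incomparable_prism_edgeE[OF assms(4-6)] .
  have "(a, b) \<noteq> (c, d)" using ab(2) cd(2) assms(7) by auto
  then show ?thesis using prism_edges_cross[OF ab(1) cd(1)] ab(2,3) cd(2,3) by simp
qed

lemma prism_segment_avoids_vertices:
  assumes "s \<in> set prism_vertices" "t \<in> set prism_vertices" "incomparable s t"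
    and "w \<in> set prism_vertices" "prism_vertex w \<in> closed_segment (prism_vertex s) (prism_vertex t)"
  shows "w \<in> {s, t}"
proof -
  obtain a b where ab: "(a, b) \<in> set prism_edges" "{a, b} = {s, t}"
    "closed_segment (prism_vertex a) (prism_vertex b) = closed_segment (prism_vertex s) (prism_vertex t)"
    using incomparable_prism_edgeE[OF assms(1-3)] .
  have "prism_vertex w \<in> closed_segment (prism_vertex a) (prism_vertex b)" using assms(5) ab(3) by (simp only:)
  then have "w \<in> {a, b}" by (rule prism_edges_avoid_vertices[OF ab(1) assms(4)])
  then show ?thesis using ab(2) by simp
qed

lemma planar_graph_straight_line:
  fixes f :: "'v \<Rightarrow> complex"
  assumes inj: "inj_on f V"
    and loopless: "\<And>u v. u \<in> V \<Longrightarrow> v \<in> V \<Longrightarrow> E u v \<Longrightarrow> u \<noteq> v"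
    and avoid: "\<And>u v w. u \<in> V \<Longrightarrow> v \<in> V \<Longrightarrow> E u v \<Longrightarrow> w \<in> V \<Longrightarrow>
      f w \<in> closed_segment (f u) (f v) \<Longrightarrow> w \<in> {u, v}"
    and cross: "\<And>u v u' v'. u \<in> V \<Longrightarrow> v \<in> V \<Longrightarrow> u' \<in> V \<Longrightarrow> v' \<in> V \<Longrightarrow> E u v \<Longrightarrow> E u' v' \<Longrightarrow>
      {u, v} \<noteq> {u', v'} \<Longrightarrow> closed_segment (f u) (f v) \<inter> closed_segment (f u') (f v') \<subseteq> f ` ({u, v} \<inter> {u', v'})"
  shows "planar_graph V E"
proof -
  define ends :: "'v set \<Rightarrow> 'v \<times> 'v" where "ends e = (SOME p. e = {fst p, snd p})" for e
  define g where "g e = linepath (f (fst (ends e))) (f (snd (ends e)))" for e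
  have ends: "{u, v} = {fst (ends {u, v}), snd (ends {u, v})}" for u v
    unfolding ends_def by (rule someI[of _ "(u, v)"]) simp
  have g: "path_image (g {u, v}) = closed_segment (f u) (f v)"
    "{pathstart (g {u, v}), pathfinish (g {u, v})} = {f u, f v}" for u v
    using ends[of u v] by (auto simp: g_def doubleton_eq_iff closed_segment_commute)
  show ?thesis
    unfolding planar_graph_def
  proof (intro exI conjI ballI impI)
    fix u v assume uv: "u \<in> V" "v \<in> V" "E u v"
    then have "f u \<noteq> f v" using loopless inj by (auto dest: inj_onD)
    then have "pathstart (g {u, v}) \<noteq> pathfinish (g {u, v})" using g(2)[of u v] by (auto simp: doubleton_eq_iff)
    then show "arc (g {u, v})" by (simp add: g_def)
    show "{pathstart (g {u, v}), pathfinish (g {u, v})} = {f u, f v}" by (rule g(2))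
    show "path_image (g {u, v}) \<inter> f ` V \<subseteq> {f u, f v}" using avoid[OF uv] by (auto simp: g(1))
  qed (use inj cross in \<open>simp_all add: g(1)\<close>)
qed

theorem planar_graph_prism_subgraph:
  fixes \<sigma> :: "'v \<Rightarrow> bool \<times> bool \<times> bool"
  assumes inj: "inj_on \<sigma> V" and vertices: "\<sigma> ` V \<subseteq> set prism_vertices"
    and edges: "\<And>x y. x \<in> V \<Longrightarrow> y \<in> V \<Longrightarrow> E x y \<Longrightarrow> incomparable (\<sigma> x) (\<sigma> y)"
  shows "planar_graph V E"
proof (rule planar_graph_straight_line[where f = "\<lambda>x. prism_vertex (\<sigma> x)"])
  have \<sigma>V: "\<sigma> x \<in> set prism_vertices" if "x \<in> V" for x using vertices that by blast
  show "inj_on (\<lambda>x. prism_vertex (\<sigma> x)) V"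
    using comp_inj_on[OF inj inj_on_subset[OF inj_on_prism_vertex vertices]] by (simp add: comp_def)
  show "u \<noteq> v" if "u \<in> V" "v \<in> V" "E u v" for u v
    using edges[OF that] by (auto simp: incomparable_def)
  show "w \<in> {u, v}" if "u \<in> V" "v \<in> V" "E u v" "w \<in> V"
    and "prism_vertex (\<sigma> w) \<in> closed_segment (prism_vertex (\<sigma> u)) (prism_vertex (\<sigma> v))" for u v w
  proof -
    have "\<sigma> w \<in> {\<sigma> u, \<sigma> v}"
      using prism_segment_avoids_vertices[OF \<sigma>V[OF that(1)] \<sigma>V[OF that(2)] edges[OF that(1-3)] \<sigma>V[OF that(4)]]
        that(5) .
    then show ?thesis using inj that(1,2,4) by (auto dest: inj_onD)
  qed
  show "closed_segment (prism_vertex (\<sigma> u)) (prism_vertex (\<sigma> v)) \<inter>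
      closed_segment (prism_vertex (\<sigma> u')) (prism_vertex (\<sigma> v')) \<subseteq> (\<lambda>x. prism_vertex (\<sigma> x)) ` ({u, v} \<inter> {u', v'})"
    if "u \<in> V" "v \<in> V" "u' \<in> V" "v' \<in> V" "E u v" "E u' v'" "{u, v} \<noteq> {u', v'}" for u v u' v'
  proof -
    have "{\<sigma> u, \<sigma> v} \<noteq> {\<sigma> u', \<sigma> v'}" using that inj by (auto simp: doubleton_eq_iff inj_on_eq_iff)
    then have "closed_segment (prism_vertex (\<sigma> u)) (prism_vertex (\<sigma> v)) \<inter>
        closed_segment (prism_vertex (\<sigma> u')) (prism_vertex (\<sigma> v')) \<subseteq> prism_vertex ` ({\<sigma> u, \<sigma> v} \<inter> {\<sigma> u', \<sigma> v'})"
      using that by (intro prism_segments_cross \<sigma>V edges)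
    also have "{\<sigma> u, \<sigma> v} \<inter> {\<sigma> u', \<sigma> v'} = \<sigma> ` ({u, v} \<inter> {u', v'})"
      using that inj by (auto simp: inj_on_eq_iff)
    finally show ?thesis by (simp add: image_image)
  qed
qed

section \<open>Local rings and two-element rings\<close>

lemma RDirProd_ops:
  "(a, b) \<otimes>\<^bsub>RDirProd R S\<^esub> (c, d) = (a \<otimes>\<^bsub>R\<^esub> c, b \<otimes>\<^bsub>S\<^esub> d)"
  "(a, b) \<oplus>\<^bsub>RDirProd R S\<^esub> (c, d) = (a \<oplus>\<^bsub>R\<^esub> c, b \<oplus>\<^bsub>S\<^esub> d)"
  "\<one>\<^bsub>RDirProd R S\<^esub> = (\<one>\<^bsub>R\<^esub>, \<one>\<^bsub>S\<^esub>)"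
  by (simp_all add: RDirProd_def DirProd_def monoid.defs)

lemma RDirProd_is_ring_iso:
  assumes "R \<simeq> R'" "S \<simeq> S'"
  shows "RDirProd R S \<simeq> RDirProd R' S'"
  using RDirProd_iso6 assms unfolding is_ring_iso_def by blast

lemma elt_ideal_sum_RDirProd:
  "elt_ideal_sum (RDirProd R S) (x, y) (I \<times> J) = elt_ideal_sum R x I \<times> elt_ideal_sum S y J"
proof (rule equalityI; rule subsetI)
  fix z assume "z \<in> elt_ideal_sum (RDirProd R S) (x, y) (I \<times> J)"
  then obtain r s i j where rsij: "r \<in> carrier R" "s \<in> carrier S" "i \<in> I" "j \<in> J"
    and "z = (x, y) \<otimes>\<^bsub>RDirProd R S\<^esub> (r, s) \<oplus>\<^bsub>RDirProd R S\<^esub> (i, j)"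
    unfolding elt_ideal_sum_def RDirProd_carrier by blast
  then have "z = (x \<otimes>\<^bsub>R\<^esub> r \<oplus>\<^bsub>R\<^esub> i, y \<otimes>\<^bsub>S\<^esub> s \<oplus>\<^bsub>S\<^esub> j)"
    by (simp add: RDirProd_ops)
  then show "z \<in> elt_ideal_sum R x I \<times> elt_ideal_sum S y J"
    unfolding elt_ideal_sum_def using rsij by auto
next
  fix z assume "z \<in> elt_ideal_sum R x I \<times> elt_ideal_sum S y J"
  then obtain r s i j where "r \<in> carrier R" "s \<in> carrier S" "i \<in> I" "j \<in> J"
    "z = (x \<otimes>\<^bsub>R\<^esub> r \<oplus>\<^bsub>R\<^esub> i, y \<otimes>\<^bsub>S\<^esub> s \<oplus>\<^bsub>S\<^esub> j)"
    unfolding elt_ideal_sum_def by blast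
  then have "z = (x, y) \<otimes>\<^bsub>RDirProd R S\<^esub> (r, s) \<oplus>\<^bsub>RDirProd R S\<^esub> (i, j)"
    "(r, s) \<in> carrier (RDirProd R S)" "(i, j) \<in> I \<times> J"
    by (simp_all add: RDirProd_ops RDirProd_carrier)
  then show "z \<in> elt_ideal_sum (RDirProd R S) (x, y) (I \<times> J)"
    unfolding elt_ideal_sum_def by blast
qed

lemma (in ring) elt_ideal_sum_subset:
  assumes "x \<in> carrier R" "I \<subseteq> carrier R"
  shows "elt_ideal_sum R x I \<subseteq> carrier R"
  using assms unfolding elt_ideal_sum_def by auto

lemma (in ideal) Units_notin:
  assumes "I \<noteq> carrier R" "u \<in> Units R"
  shows "u \<notin> I"
proof
  assume "u \<in> I"
  then have "inv u \<otimes> u \<in> I" using Units_inv_closed[OF assms(2)] by (rule I_l_closed)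
  then have "\<one> \<in> I" using Units_l_inv[OF assms(2)] by simp
  then show False using one_imp_carrier assms(1) by blast
qed

lemma (in cring) mem_elt_ideal_sum_iff:
  assumes J: "ideal J R" and x: "x \<in> carrier R" and y: "y \<in> J \<union> Units R"
  shows "x \<in> elt_ideal_sum R y J \<longleftrightarrow> (y \<in> J \<longrightarrow> x \<in> J)"
proof
  interpret J: ideal J R by (rule J)
  assume "x \<in> elt_ideal_sum R y J"
  then obtain r i where "r \<in> carrier R" "i \<in> J" "x = y \<otimes> r \<oplus> i"
    unfolding elt_ideal_sum_def by blast
  then show "y \<in> J \<longrightarrow> x \<in> J" by (simp add: J.I_r_closed)
next
  interpret J: ideal J R by (rule J)
  have y_carrier: "y \<in> carrier R" using y J.a_subset by blast
  assume "y \<in> J \<longrightarrow> x \<in> J"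
  then consider "x \<in> J" | "y \<in> Units R" using y by blast
  then show "x \<in> elt_ideal_sum R y J"
  proof cases
    case 1
    then have "x = y \<otimes> \<zero> \<oplus> x" using x y_carrier by simp
    then show ?thesis using 1 unfolding elt_ideal_sum_def by blast
  next
    case 2
    then have "x = y \<otimes> (inv y \<otimes> x) \<oplus> \<zero>" using x
      by (simp add: m_assoc[symmetric] Units_r_inv Units_closed)
    moreover have "inv y \<otimes> x \<in> carrier R" using 2 x by (simp add: Units_inv_closed)
    ultimately show ?thesis unfolding elt_ideal_sum_def using J.zero_closed by blast
  qed
qed

lemma (in cring) maximalideal_superset:
  assumes "finite (carrier R)" "ideal J R" "J \<noteq> carrier R"
  obtains M where "maximalideal M R" "J \<subseteq> M"
proof -
  define S where "S = {K. ideal K R \<and> J \<subseteq> K \<and> K \<noteq> carrier R}"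
  have "S \<subseteq> Pow (carrier R)" by (auto simp: S_def dest: ideal.Icarr)
  then have "finite S" using assms(1) by (meson finite_Pow_iff finite_subset)
  moreover have "J \<in> S" unfolding S_def using assms(2,3) by blast
  ultimately obtain M where M: "M \<in> S" "J \<subseteq> M" "\<forall>K\<in>S. M \<subseteq> K \<longrightarrow> M = K"
    using finite_has_maximal2 by blast
  have "maximalideal M R"
  proof (rule maximalidealI)
    show "ideal M R" "carrier R \<noteq> M" using M(1) unfolding S_def by auto
    fix K assume "ideal K R" "M \<subseteq> K" "K \<subseteq> carrier R"
    then show "K = M \<or> K = carrier R" using M unfolding S_def by blast
  qed
  then show thesis using M(2) by (rule that)
qed

lemma (in cring) local_ring_nonunit_in_maximalideal:
  assumes local: "local_ring R" and fin: "finite (carrier R)" and M: "maximalideal M R"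
    and x: "x \<in> carrier R" "x \<notin> Units R"
  shows "x \<in> M"
proof -
  have "PIdl x \<noteq> carrier R" using ideal_eq_carrier_iff[OF x(1)] x(2) by blast
  then obtain M' where M': "maximalideal M' R" "PIdl x \<subseteq> M'"
    using maximalideal_superset[OF fin cgenideal_ideal[OF x(1)]] by blast
  have "M' = M" using local M M'(1) unfolding local_ring_def by blast
  then show ?thesis using M'(2) cgenideal_self[OF x(1)] by blast
qed

text \<open>If \<open>x\<close> were a nonunit other than \<open>\<zero>\<close>, both \<open>x\<close> and \<open>\<one> \<oplus> x \<noteq> \<one>\<close> would lie in the maximal
  ideal, and so would \<open>\<one>\<close>.\<close>
lemma (in cring) local_ring_Units_trivial:
  assumes local: "local_ring R" and fin: "finite (carrier R)" and U: "Units R = {\<one>}"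
  shows "carrier R = {\<zero>, \<one>}"
proof (rule ccontr)
  assume "carrier R \<noteq> {\<zero>, \<one>}"
  then obtain x where x: "x \<in> carrier R" "x \<noteq> \<zero>" "x \<noteq> \<one>" by blast
  obtain M where M: "maximalideal M R" using local unfolding local_ring_def by blast
  interpret M: maximalideal M R by (rule M)
  have "x \<in> M" using local_ring_nonunit_in_maximalideal[OF local fin M x(1)] U x(3) by blast
  moreover have "\<one> \<oplus> x \<noteq> \<one>" using add.l_cancel[of \<one> x \<zero>] x(1,2) by simp
  then have "\<one> \<oplus> x \<in> M" using local_ring_nonunit_in_maximalideal[OF local fin M] x(1) U by simp
  ultimately have "\<one> \<oplus> x \<ominus> x \<in> M" by (simp add: a_minus_def)
  moreover have "\<one> \<oplus> x \<ominus> x = \<one>" using x(1) by (simp add: a_minus_def a_assoc r_neg)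
  ultimately show False using M.one_imp_carrier M.I_notcarr by simp
qed

lemma (in ring) two_le_card_carrier:
  assumes "finite (carrier R)" "\<zero> \<noteq> \<one>"
  shows "2 \<le> card (carrier R)"
proof -
  have "card {\<zero>, \<one>} \<le> card (carrier R)" using assms(1) by (intro card_mono) auto
  then show ?thesis using assms(2) by simp
qed

lemma (in ring) carrier_eq_zero_one_if_card_2:
  assumes "finite (carrier R)" "\<zero> \<noteq> \<one>" "card (carrier R) = 2"
  shows "carrier R = {\<zero>, \<one>}"
  using card_subset_eq[OF assms(1), of "{\<zero>, \<one>}"] assms(2,3) by simp

lemma (in ring) two_element_one_add_one:
  assumes "carrier R = {\<zero>, \<one>}" "\<zero> \<noteq> \<one>"
  shows "\<one> \<oplus> \<one> = \<zero>"
proof -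
  have "\<one> \<oplus> \<one> \<noteq> \<one>" using add.l_cancel[of \<one> \<one> \<zero>] assms(2) by auto
  moreover have "\<one> \<oplus> \<one> \<in> {\<zero>, \<one>}" using assms(1) one_closed add.m_closed by blast
  ultimately show ?thesis by blast
qed

lemma two_element_rings_iso:
  assumes A: "ring A" "carrier A = {\<zero>\<^bsub>A\<^esub>, \<one>\<^bsub>A\<^esub>}" "\<zero>\<^bsub>A\<^esub> \<noteq> \<one>\<^bsub>A\<^esub>"
    and B: "ring B" "carrier B = {\<zero>\<^bsub>B\<^esub>, \<one>\<^bsub>B\<^esub>}" "\<zero>\<^bsub>B\<^esub> \<noteq> \<one>\<^bsub>B\<^esub>"
  shows "A \<simeq> B"
proof -
  define h where "h x = (if x = \<one>\<^bsub>A\<^esub> then \<one>\<^bsub>B\<^esub> else \<zero>\<^bsub>B\<^esub>)" for x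
  have "h \<in> ring_hom A B"
  proof (rule ring_hom_memI)
    fix x y assume "x \<in> carrier A" "y \<in> carrier A"
    then have "x = \<zero>\<^bsub>A\<^esub> \<or> x = \<one>\<^bsub>A\<^esub>" "y = \<zero>\<^bsub>A\<^esub> \<or> y = \<one>\<^bsub>A\<^esub>" using A(2) by auto
    moreover note ring.two_element_one_add_one[OF A] ring.two_element_one_add_one[OF B]
    ultimately show "h (x \<otimes>\<^bsub>A\<^esub> y) = h x \<otimes>\<^bsub>B\<^esub> h y" "h (x \<oplus>\<^bsub>A\<^esub> y) = h x \<oplus>\<^bsub>B\<^esub> h y"
      unfolding h_def using A(1,3) B(1,3) by (auto simp: ring.ring_simprules)
  qed (use B(2) in \<open>auto simp: h_def\<close>)
  moreover have "bij_betw h (carrier A) (carrier B)"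
    using A(2,3) B(2,3) unfolding bij_betw_def inj_on_def h_def by auto
  ultimately show ?thesis unfolding is_ring_iso_def ring_iso_def by blast
qed

lemma carrier_ZFact_2: "carrier (ZFact 2) = {\<zero>\<^bsub>ZFact 2\<^esub>, \<one>\<^bsub>ZFact 2\<^esub>}"
proof -
  have carrier: "carrier (ZFact 2) = range (ZMod 2)"
    unfolding ZFact_def FactRing_def A_RCOSETS_defs ZMod_def a_r_coset_def by auto
  have zero: "\<zero>\<^bsub>ZFact 2\<^esub> = ZMod 2 0"
    unfolding ZFact_def FactRing_def ZMod_def using int.a_coset_add_zero[of "Idl\<^bsub>\<Z>\<^esub> {2}"] by simp
  have one: "\<one>\<^bsub>ZFact 2\<^esub> = ZMod 2 1" unfolding ZFact_def FactRing_def ZMod_def by simp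
  have "ZMod 2 a \<in> {ZMod 2 0, ZMod 2 1}" for a :: int
  proof -
    have "a mod 2 = 0 \<or> a mod 2 = 1" by presburger
    then show ?thesis
      by (elim disjE) (simp_all only: ZMod_mod[of 2 a] insert_iff refl simp_thms)
  qed
  then show ?thesis using carrier zero one by auto
qed

lemma ZFact_2_zero_ne_one: "\<zero>\<^bsub>ZFact 2\<^esub> \<noteq> \<one>\<^bsub>ZFact 2\<^esub>"
  using domain.one_not_zero[OF ZFact_prime_is_domain[of 2]] by auto

lemma nat_factors_eq_2_if_prod_eq_8:
  fixes a b c :: nat
  assumes "a * b * c = 8" "2 \<le> a" "2 \<le> b" "2 \<le> c"
  shows "a = 2" "b = 2" "c = 2"
proof -
  have "a * 2 * 2 \<le> a * b * c" "2 * b * 2 \<le> a * b * c" "2 * 2 * c \<le> a * b * c"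
    using assms(2-4) by (intro mult_le_mono; simp)+
  then show "a = 2" "b = 2" "c = 2" using assms by linarith+
qed

section \<open>The graph for a product of three rings\<close>

locale ideal_triple =
  R1: cring R1 + R2: cring R2 + R3: cring R3 + J1: ideal I1 R1 + J2: ideal I2 R2 + J3: ideal I3 R3
  for R1 :: "('a, 'm1) ring_scheme" and R2 :: "('b, 'm2) ring_scheme" and R3 :: "('c, 'm3) ring_scheme"
    and I1 :: "'a set" and I2 :: "'b set" and I3 :: "'c set" +
  assumes proper: "I1 \<noteq> carrier R1" "I2 \<noteq> carrier R2" "I3 \<noteq> carrier R3"
begin

abbreviation R where "R \<equiv> RDirProd R1 (RDirProd R2 R3)"
abbreviation I where "I \<equiv> I1 \<times> I2 \<times> I3"
abbreviation unit_or_ideal where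
  "unit_or_ideal \<equiv> (I1 \<union> Units R1) \<times> (I2 \<union> Units R2) \<times> (I3 \<union> Units R3)"

definition support_mod :: "'a \<times> 'b \<times> 'c \<Rightarrow> bool \<times> bool \<times> bool" where
  "support_mod = (\<lambda>(x, y, z). (x \<notin> I1, y \<notin> I2, z \<notin> I3))"

lemma support_mod_simp [simp]: "support_mod (x, y, z) = (x \<notin> I1, y \<notin> I2, z \<notin> I3)"
  by (simp add: support_mod_def)

lemma carrier_R: "carrier R = carrier R1 \<times> carrier R2 \<times> carrier R3"
  by (simp add: RDirProd_carrier)

lemma ring_R: "ring R"
  by (intro RDirProd_ring R1.ring_axioms R2.ring_axioms R3.ring_axioms)

lemma one_R: "\<one>\<^bsub>R\<^esub> = (\<one>\<^bsub>R1\<^esub>, \<one>\<^bsub>R2\<^esub>, \<one>\<^bsub>R3\<^esub>)"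
  by (simp add: RDirProd_ops)

lemma one_notin_ideals: "\<one>\<^bsub>R1\<^esub> \<notin> I1" "\<one>\<^bsub>R2\<^esub> \<notin> I2" "\<one>\<^bsub>R3\<^esub> \<notin> I3"
  using J1.one_imp_carrier J2.one_imp_carrier J3.one_imp_carrier proper by blast+

lemma zero_ne_one: "\<zero>\<^bsub>R1\<^esub> \<noteq> \<one>\<^bsub>R1\<^esub>" "\<zero>\<^bsub>R2\<^esub> \<noteq> \<one>\<^bsub>R2\<^esub>" "\<zero>\<^bsub>R3\<^esub> \<noteq> \<one>\<^bsub>R3\<^esub>"
  using J1.zero_closed J2.zero_closed J3.zero_closed one_notin_ideals by metis+

lemma Units_notin_ideals: "u \<in> Units R1 \<Longrightarrow> u \<notin> I1" "v \<in> Units R2 \<Longrightarrow> v \<notin> I2" "w \<in> Units R3 \<Longrightarrow> w \<notin> I3"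
  using J1.Units_notin J2.Units_notin J3.Units_notin proper by blast+

lemma unit_or_ideal_subset_carrier: "unit_or_ideal \<subseteq> carrier R"
  using J1.Icarr J2.Icarr J3.Icarr R1.Units_closed R2.Units_closed R3.Units_closed
  by (auto simp: carrier_R)

lemma mem_elt_ideal_sum_iff_support_mod:
  assumes "x \<in> carrier R" "y \<in> unit_or_ideal"
  shows "x \<in> elt_ideal_sum R y I \<longleftrightarrow> support_mod x \<le> support_mod y"
proof -
  obtain x1 x2 x3 y1 y2 y3 where "x = (x1, x2, x3)" "y = (y1, y2, y3)" by (cases x, cases y) auto
  then show ?thesis
    using assms R1.mem_elt_ideal_sum_iff[OF J1.is_ideal, of x1 y1]
      R2.mem_elt_ideal_sum_iff[OF J2.is_ideal, of x2 y2] R3.mem_elt_ideal_sum_iff[OF J3.is_ideal, of x3 y3]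
    by (auto simp: elt_ideal_sum_RDirProd carrier_R)
qed

lemma elt_ideal_sum_eq_carrier_iff:
  assumes y: "y \<in> unit_or_ideal"
  shows "elt_ideal_sum R y I = carrier R \<longleftrightarrow> support_mod y = (True, True, True)"
proof
  have "\<one>\<^bsub>R\<^esub> \<in> carrier R" by (simp add: ring.ring_simprules(6)[OF ring_R])
  moreover assume "elt_ideal_sum R y I = carrier R"
  ultimately have "support_mod \<one>\<^bsub>R\<^esub> \<le> support_mod y"
    using mem_elt_ideal_sum_iff_support_mod[OF _ y] by blast
  then show "support_mod y = (True, True, True)" using one_notin_ideals by (cases y) (auto simp: one_R)
next
  assume top: "support_mod y = (True, True, True)"
  have "y \<in> carrier R" using y unit_or_ideal_subset_carrier by blast
  then have "elt_ideal_sum R y I \<subseteq> carrier R"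
    using J1.Icarr J2.Icarr J3.Icarr by (intro ring.elt_ideal_sum_subset[OF ring_R]) (auto simp: carrier_R)
  moreover have "carrier R \<subseteq> elt_ideal_sum R y I"
    using mem_elt_ideal_sum_iff_support_mod[OF _ y] top by (auto simp: less_eq_prod_def)
  ultimately show "elt_ideal_sum R y I = carrier R" by blast
qed

lemma gamma2_verts_iff:
  assumes "x \<in> unit_or_ideal"
  shows "x \<in> gamma2_verts R I \<longleftrightarrow> support_mod x \<in> set prism_vertices"
proof -
  have "x \<in> carrier R" using assms unit_or_ideal_subset_carrier by blast
  moreover have "x \<notin> I \<longleftrightarrow> support_mod x \<noteq> (False, False, False)" by (cases x) auto
  ultimately show ?thesis
    using elt_ideal_sum_eq_carrier_iff[OF assms] unfolding gamma2_verts_def mem_prism_vertices_iff by blast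
qed

lemma gamma2_adj_iff:
  assumes "x \<in> unit_or_ideal" "y \<in> unit_or_ideal"
  shows "gamma2_adj R I x y \<longleftrightarrow> x \<noteq> y \<and> incomparable (support_mod x) (support_mod y)"
proof -
  have "x \<in> carrier R" "y \<in> carrier R" using assms unit_or_ideal_subset_carrier by blast+
  then show ?thesis
    unfolding gamma2_adj_def incomparable_def
    by (simp add: mem_elt_ideal_sum_iff_support_mod assms)
qed

lemma not_planar_if_K33:
  assumes "{a1, a2, a3, b1, b2, b3} \<subseteq> unit_or_ideal" "distinct [a1, a2, a3, b1, b2, b3]"
    and "\<forall>x\<in>{a1, a2, a3, b1, b2, b3}. support_mod x \<in> set prism_vertices"
    and "\<forall>a\<in>{a1, a2, a3}. \<forall>b\<in>{b1, b2, b3}. incomparable (support_mod a) (support_mod b)"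
  shows "\<not> planar_graph (gamma2_verts R I) (gamma2_adj R I)"
proof (rule not_planar_graph_K33)
  show "{a1, a2, a3, b1, b2, b3} \<subseteq> gamma2_verts R I"
  proof
    fix x assume "x \<in> {a1, a2, a3, b1, b2, b3}"
    then show "x \<in> gamma2_verts R I" using gamma2_verts_iff[of x] assms(1,3) by blast
  qed
  show "distinct [a1, a2, a3, b1, b2, b3]" by (rule assms(2))
  fix a b assume ab: "a \<in> {a1, a2, a3}" "b \<in> {b1, b2, b3}"
  have "a \<in> unit_or_ideal" "b \<in> unit_or_ideal" using assms(1) ab by blast+
  moreover have "a \<noteq> b" using assms(2) ab by auto
  moreover have "incomparable (support_mod a) (support_mod b)" using assms(4) ab by blast
  ultimately show "gamma2_adj R I a b" by (simp add: gamma2_adj_iff)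
qed

lemma not_planar_if_unit_ne_one:
  shows "u \<in> Units R1 \<Longrightarrow> u \<noteq> \<one>\<^bsub>R1\<^esub> \<Longrightarrow> \<not> planar_graph (gamma2_verts R I) (gamma2_adj R I)"
    and "v \<in> Units R2 \<Longrightarrow> v \<noteq> \<one>\<^bsub>R2\<^esub> \<Longrightarrow> \<not> planar_graph (gamma2_verts R I) (gamma2_adj R I)"
    and "w \<in> Units R3 \<Longrightarrow> w \<noteq> \<one>\<^bsub>R3\<^esub> \<Longrightarrow> \<not> planar_graph (gamma2_verts R I) (gamma2_adj R I)"
proof -
  note elements = zero_ne_one zero_ne_one[symmetric] one_notin_ideals
  show "\<not> planar_graph (gamma2_verts R I) (gamma2_adj R I)" if u: "u \<in> Units R1" "u \<noteq> \<one>\<^bsub>R1\<^esub>"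
  proof -
    have "u \<notin> I1" "u \<noteq> \<zero>\<^bsub>R1\<^esub>" using Units_notin_ideals(1)[OF u(1)] by auto
    then show ?thesis using u u(2)[symmetric] \<open>u \<noteq> \<zero>\<^bsub>R1\<^esub>\<close>[symmetric] elements
      by (intro not_planar_if_K33[of "(\<zero>\<^bsub>R1\<^esub>, \<one>\<^bsub>R2\<^esub>, \<zero>\<^bsub>R3\<^esub>)" "(\<one>\<^bsub>R1\<^esub>, \<one>\<^bsub>R2\<^esub>, \<zero>\<^bsub>R3\<^esub>)"
             "(u, \<one>\<^bsub>R2\<^esub>, \<zero>\<^bsub>R3\<^esub>)" "(\<zero>\<^bsub>R1\<^esub>, \<zero>\<^bsub>R2\<^esub>, \<one>\<^bsub>R3\<^esub>)" "(\<one>\<^bsub>R1\<^esub>, \<zero>\<^bsub>R2\<^esub>, \<one>\<^bsub>R3\<^esub>)"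
             "(u, \<zero>\<^bsub>R2\<^esub>, \<one>\<^bsub>R3\<^esub>)"])
        (simp_all add: prism_vertices_def incomparable_def)
  qed
  show "\<not> planar_graph (gamma2_verts R I) (gamma2_adj R I)" if v: "v \<in> Units R2" "v \<noteq> \<one>\<^bsub>R2\<^esub>"
  proof -
    have "v \<notin> I2" "v \<noteq> \<zero>\<^bsub>R2\<^esub>" using Units_notin_ideals(2)[OF v(1)] by auto
    then show ?thesis using v v(2)[symmetric] \<open>v \<noteq> \<zero>\<^bsub>R2\<^esub>\<close>[symmetric] elements
      by (intro not_planar_if_K33[of "(\<one>\<^bsub>R1\<^esub>, \<zero>\<^bsub>R2\<^esub>, \<zero>\<^bsub>R3\<^esub>)" "(\<one>\<^bsub>R1\<^esub>, \<one>\<^bsub>R2\<^esub>, \<zero>\<^bsub>R3\<^esub>)"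
             "(\<one>\<^bsub>R1\<^esub>, v, \<zero>\<^bsub>R3\<^esub>)" "(\<zero>\<^bsub>R1\<^esub>, \<zero>\<^bsub>R2\<^esub>, \<one>\<^bsub>R3\<^esub>)" "(\<zero>\<^bsub>R1\<^esub>, \<one>\<^bsub>R2\<^esub>, \<one>\<^bsub>R3\<^esub>)"
             "(\<zero>\<^bsub>R1\<^esub>, v, \<one>\<^bsub>R3\<^esub>)"])
        (simp_all add: prism_vertices_def incomparable_def)
  qed
  show "\<not> planar_graph (gamma2_verts R I) (gamma2_adj R I)" if w: "w \<in> Units R3" "w \<noteq> \<one>\<^bsub>R3\<^esub>"
  proof -
    have "w \<notin> I3" "w \<noteq> \<zero>\<^bsub>R3\<^esub>" using Units_notin_ideals(3)[OF w(1)] by auto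
    then show ?thesis using w w(2)[symmetric] \<open>w \<noteq> \<zero>\<^bsub>R3\<^esub>\<close>[symmetric] elements
      by (intro not_planar_if_K33[of "(\<one>\<^bsub>R1\<^esub>, \<zero>\<^bsub>R2\<^esub>, \<zero>\<^bsub>R3\<^esub>)" "(\<one>\<^bsub>R1\<^esub>, \<zero>\<^bsub>R2\<^esub>, \<one>\<^bsub>R3\<^esub>)"
             "(\<one>\<^bsub>R1\<^esub>, \<zero>\<^bsub>R2\<^esub>, w)" "(\<zero>\<^bsub>R1\<^esub>, \<one>\<^bsub>R2\<^esub>, \<zero>\<^bsub>R3\<^esub>)" "(\<zero>\<^bsub>R1\<^esub>, \<one>\<^bsub>R2\<^esub>, \<one>\<^bsub>R3\<^esub>)"
             "(\<zero>\<^bsub>R1\<^esub>, \<one>\<^bsub>R2\<^esub>, w)"])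
        (simp_all add: prism_vertices_def incomparable_def)
  qed
qed

lemma Units_trivial_if_planar:
  assumes "planar_graph (gamma2_verts R I) (gamma2_adj R I)"
  shows "Units R1 = {\<one>\<^bsub>R1\<^esub>}" "Units R2 = {\<one>\<^bsub>R2\<^esub>}" "Units R3 = {\<one>\<^bsub>R3\<^esub>}"
  using not_planar_if_unit_ne_one assms R1.Units_one_closed R2.Units_one_closed R3.Units_one_closed
  by blast+

lemma planar_if_two_element_factors:
  assumes "carrier R1 = {\<zero>\<^bsub>R1\<^esub>, \<one>\<^bsub>R1\<^esub>}" "carrier R2 = {\<zero>\<^bsub>R2\<^esub>, \<one>\<^bsub>R2\<^esub>}"
    "carrier R3 = {\<zero>\<^bsub>R3\<^esub>, \<one>\<^bsub>R3\<^esub>}"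
  shows "planar_graph (gamma2_verts R I) (gamma2_adj R I)"
proof (rule planar_graph_prism_subgraph)
  have "I1 = {\<zero>\<^bsub>R1\<^esub>}" "I2 = {\<zero>\<^bsub>R2\<^esub>}" "I3 = {\<zero>\<^bsub>R3\<^esub>}"
    using assms J1.Icarr J2.Icarr J3.Icarr J1.zero_closed J2.zero_closed J3.zero_closed one_notin_ideals
    by blast+
  then have "a \<in> I1 \<longleftrightarrow> a = \<zero>\<^bsub>R1\<^esub>" "b \<in> I2 \<longleftrightarrow> b = \<zero>\<^bsub>R2\<^esub>" "c \<in> I3 \<longleftrightarrow> c = \<zero>\<^bsub>R3\<^esub>" for a b c
    by simp_all
  then have "inj_on support_mod (carrier R)"
    unfolding inj_on_def carrier_R assms using zero_ne_one by auto
  moreover have verts: "gamma2_verts R I \<subseteq> carrier R" by (auto simp: gamma2_verts_def)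
  ultimately show "inj_on support_mod (gamma2_verts R I)" by (rule inj_on_subset)
  have "carrier R \<subseteq> unit_or_ideal"
    using assms J1.zero_closed J2.zero_closed J3.zero_closed
      R1.Units_one_closed R2.Units_one_closed R3.Units_one_closed
    by (auto simp: carrier_R)
  with verts have unit_or_ideal: "gamma2_verts R I \<subseteq> unit_or_ideal" by blast
  then show "support_mod ` gamma2_verts R I \<subseteq> set prism_vertices" using gamma2_verts_iff by blast
  fix x y assume "x \<in> gamma2_verts R I" "y \<in> gamma2_verts R I" "gamma2_adj R I x y"
  then show "incomparable (support_mod x) (support_mod y)" using gamma2_adj_iff unit_or_ideal by blast
qed

lemma two_element_factors_if_card_8:
  assumes "finite (carrier R1)" "finite (carrier R2)" "finite (carrier R3)" "card (carrier R) = 8"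
  shows "carrier R1 = {\<zero>\<^bsub>R1\<^esub>, \<one>\<^bsub>R1\<^esub>}" "carrier R2 = {\<zero>\<^bsub>R2\<^esub>, \<one>\<^bsub>R2\<^esub>}"
    "carrier R3 = {\<zero>\<^bsub>R3\<^esub>, \<one>\<^bsub>R3\<^esub>}"
proof -
  have prod: "card (carrier R1) * card (carrier R2) * card (carrier R3) = 8"
    using assms(4) by (simp add: carrier_R card_cartesian_product)
  have ge: "2 \<le> card (carrier R1)" "2 \<le> card (carrier R2)" "2 \<le> card (carrier R3)"
    using R1.two_le_card_carrier[OF assms(1) zero_ne_one(1)] R2.two_le_card_carrier[OF assms(2) zero_ne_one(2)]
      R3.two_le_card_carrier[OF assms(3) zero_ne_one(3)] .
  note card = nat_factors_eq_2_if_prod_eq_8[OF prod ge]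
  show "carrier R1 = {\<zero>\<^bsub>R1\<^esub>, \<one>\<^bsub>R1\<^esub>}"
    by (rule R1.carrier_eq_zero_one_if_card_2[OF assms(1) zero_ne_one(1) card(1)])
  show "carrier R2 = {\<zero>\<^bsub>R2\<^esub>, \<one>\<^bsub>R2\<^esub>}"
    by (rule R2.carrier_eq_zero_one_if_card_2[OF assms(2) zero_ne_one(2) card(2)])
  show "carrier R3 = {\<zero>\<^bsub>R3\<^esub>, \<one>\<^bsub>R3\<^esub>}"
    by (rule R3.carrier_eq_zero_one_if_card_2[OF assms(3) zero_ne_one(3) card(3)])
qed

end

theorem corollary3p7:
  fixes R1 :: "'a ring" and R2 :: "'b ring" and R3 :: "'c ring"
    and I1 :: "'a set" and I2 :: "'b set" and I3 :: "'c set"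
  assumes "local_ring R1" "local_ring R2" "local_ring R3"
    and "finite (carrier R1)" "finite (carrier R2)" "finite (carrier R3)"
    and "ideal I1 R1" "I1 \<noteq> carrier R1"
    and "ideal I2 R2" "I2 \<noteq> carrier R2"
    and "ideal I3 R3" "I3 \<noteq> carrier R3"
  shows "planar_graph
           (gamma2_verts (RDirProd R1 (RDirProd R2 R3)) (I1 \<times> I2 \<times> I3))
           (gamma2_adj (RDirProd R1 (RDirProd R2 R3)) (I1 \<times> I2 \<times> I3))
         \<longleftrightarrow> RDirProd R1 (RDirProd R2 R3) \<simeq> RDirProd (ZFact 2) (RDirProd (ZFact 2) (ZFact 2))"
proof -
  have cring: "cring R1" "cring R2" "cring R3" using assms(1-3) by (simp_all add: local_ring_def)
  interpret ideal_triple R1 R2 R3 I1 I2 I3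
    unfolding ideal_triple_def ideal_triple_axioms_def using cring assms(7-12) by blast
  have Z2: "ring (ZFact 2)" "carrier (ZFact 2) = {\<zero>\<^bsub>ZFact 2\<^esub>, \<one>\<^bsub>ZFact 2\<^esub>}" "\<zero>\<^bsub>ZFact 2\<^esub> \<noteq> \<one>\<^bsub>ZFact 2\<^esub>"
    using ZFact_is_cring cring.axioms(1) carrier_ZFact_2 ZFact_2_zero_ne_one by blast+
  show ?thesis
  proof
    assume planar: "planar_graph (gamma2_verts R I) (gamma2_adj R I)"
    have "R1 \<simeq> ZFact 2" "R2 \<simeq> ZFact 2" "R3 \<simeq> ZFact 2"
      using R1.local_ring_Units_trivial[OF assms(1,4) Units_trivial_if_planar(1)[OF planar]]
        R2.local_ring_Units_trivial[OF assms(2,5) Units_trivial_if_planar(2)[OF planar]]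
        R3.local_ring_Units_trivial[OF assms(3,6) Units_trivial_if_planar(3)[OF planar]]
        two_element_rings_iso[OF R1.ring_axioms _ zero_ne_one(1) Z2]
        two_element_rings_iso[OF R2.ring_axioms _ zero_ne_one(2) Z2]
        two_element_rings_iso[OF R3.ring_axioms _ zero_ne_one(3) Z2]
      by simp_all
    then show "R \<simeq> RDirProd (ZFact 2) (RDirProd (ZFact 2) (ZFact 2))"
      by (intro RDirProd_is_ring_iso)
  next
    assume "R \<simeq> RDirProd (ZFact 2) (RDirProd (ZFact 2) (ZFact 2))"
    then have "card (carrier R) = card (carrier (RDirProd (ZFact 2) (RDirProd (ZFact 2) (ZFact 2))))"
      by (rule ring_iso_same_card)
    also have "\<dots> = 8" using Z2(2,3) by (simp add: RDirProd_carrier card_cartesian_product)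
    finally show "planar_graph (gamma2_verts R I) (gamma2_adj R I)"
      by (intro planar_if_two_element_factors two_element_factors_if_card_8 assms(4-6))
  qed
qed

end
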